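(* Let $N$ be a finite set, $C\subseteq N$ with $|C|\ge2$, and $k\in\{1,\ldots,|C|-1\}$. The set function $m_{C,k}(S)=\max\{0,|S\cap C|-k\}$, $S\subseteq N$, is an extreme standardized supermodular function, and the objective $o(a|B)=m_{C,k}(\{a\}\cup B)-m_{C,k}(B)$, $(a|B)\in\Upsilon$, is exactly the objective of the $k$-cluster inequality $$\sum_{a\in C}\ \sum_{B\subseteq N\setminus\{a\}:\,|B\cap C|\ge k}\eta(a|B)\le |C|-k,$$ i.e. $o(a|B)=1$ if $a\in C$ and $|B\cap C|\ge k$, and $o(a|B)=0$ otherwise; moreover $\langle o,\eta_H\rangle=|C|-k$ for every full graph $H$ over $N$.
   Context: $\Upsilon=\{(a|B): a\in N,\ \emptyset\neq B\subseteq N\setminus\{a\}\}$; for an acyclic directed graph $G$ over $N$ with parent sets $\mathrm{pa}_G(a)$, $\eta_G\in\mathbb{R}^{\Upsilon}$ has $\eta_G(a|B)=1$ if $B=\mathrm{pa}_G(a)$, else $0$. A full graph is an acyclic directed graph over $N$ in which every pair of distinct nodes is adjacent. A set function $m:\mathcal{P}(N)\to\mathbb{R}$ is standardized if $m(S)=0$ for $|S|\le 1$, supermodular if $m(U)+m(V)\le m(U\cup V)+m(U\cap V)$ for all $U,V\subseteq N$; it is extreme if it generates an extreme ray of the (pointed polyhedral) cone of standardized supermodular functions. *)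

theory Defs
  imports Complex_Main
begin

text \<open>Set functions on the subsets of a finite ground set N are modelled as
  functions of type 'a set => real; only their values on subsets of N matter.\<close>

definition standardized :: "'a set \<Rightarrow> ('a set \<Rightarrow> real) \<Rightarrow> bool" where
  "standardized N m \<longleftrightarrow> (\<forall>S. S \<subseteq> N \<and> card S \<le> 1 \<longrightarrow> m S = 0)"

definition supermodular :: "'a set \<Rightarrow> ('a set \<Rightarrow> real) \<Rightarrow> bool" where
  "supermodular N m \<longleftrightarrow>
     (\<forall>U V. U \<subseteq> N \<and> V \<subseteq> N \<longrightarrow> m U + m V \<le> m (U \<union> V) + m (U \<inter> V))"

definition std_supermod_cone :: "'a set \<Rightarrow> ('a set \<Rightarrow> real) set" where
  "std_supermod_cone N = {m. standardized N m \<and> supermodular N m}"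

definition extreme :: "'a set \<Rightarrow> ('a set \<Rightarrow> real) \<Rightarrow> bool" where
  "extreme N m \<longleftrightarrow>
     m \<in> std_supermod_cone N \<and> (\<exists>S\<subseteq>N. m S \<noteq> 0) \<and>
     (\<forall>m1 m2. m1 \<in> std_supermod_cone N \<and> m2 \<in> std_supermod_cone N \<and>
        (\<forall>S\<subseteq>N. m S = m1 S + m2 S) \<longrightarrow>
        (\<exists>c\<ge>0. \<forall>S\<subseteq>N. m1 S = c * m S))"

definition Upsilon :: "'a set \<Rightarrow> ('a \<times> 'a set) set" where
  "Upsilon N = {(a, B). a \<in> N \<and> B \<noteq> {} \<and> B \<subseteq> N - {a}}"

text \<open>Acyclic directed graphs over N, given by their set of arrows (b,a) meaning b -> a.\<close>
definition is_dag :: "'a set \<Rightarrow> ('a \<times> 'a) set \<Rightarrow> bool" where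
  "is_dag N E \<longleftrightarrow> E \<subseteq> N \<times> N \<and> acyclic E"

definition pa :: "('a \<times> 'a) set \<Rightarrow> 'a \<Rightarrow> 'a set" where
  "pa E a = {b. (b, a) \<in> E}"

definition full_graph :: "'a set \<Rightarrow> ('a \<times> 'a) set \<Rightarrow> bool" where
  "full_graph N E \<longleftrightarrow> is_dag N E \<and>
     (\<forall>a\<in>N. \<forall>b\<in>N. a \<noteq> b \<longrightarrow> (a, b) \<in> E \<or> (b, a) \<in> E)"

definition eta :: "('a \<times> 'a) set \<Rightarrow> 'a \<times> 'a set \<Rightarrow> real" where
  "eta E = (\<lambda>(a, B). if B = pa E a then 1 else 0)"

definition inner_Ups :: "'a set \<Rightarrow> ('a \<times> 'a set \<Rightarrow> real) \<Rightarrow> ('a \<times> 'a set \<Rightarrow> real) \<Rightarrow> real" where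
  "inner_Ups N o' x = (\<Sum>ab\<in>Upsilon N. o' ab * x ab)"

definition m_Ck :: "'a set \<Rightarrow> nat \<Rightarrow> 'a set \<Rightarrow> real" where
  "m_Ck C k S = max 0 (real (card (S \<inter> C)) - real k)"

definition obj_of :: "('a set \<Rightarrow> real) \<Rightarrow> 'a \<times> 'a set \<Rightarrow> real" where
  "obj_of m = (\<lambda>(a, B). m (insert a B) - m B)"

definition cluster_obj :: "'a set \<Rightarrow> nat \<Rightarrow> 'a \<times> 'a set \<Rightarrow> real" where
  "cluster_obj C k = (\<lambda>(a, B). if a \<in> C \<and> card (B \<inter> C) \<ge> k then 1 else 0)"

end

theory Submission
  imports Defs
begin

text \<open>Extremality: if m_Ck = m1 + m2 with m1, m2 standardized supermodular, then both summands
  are monotone and nonnegative, so they cannot grow where m_Ck does not; hence m1 only depends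
  on S \<inter> C, vanishes on sets meeting C in at most k elements, and is modular above that
  threshold. Such a function has the same increment c everywhere above the threshold (two
  increments at different points are linked through a set of size k, where m1 vanishes), so
  m1 = c m_Ck. For a full graph H the numbers |pa(a) \<inter> C|, a \<in> C, are exactly
  0, ..., |C| - 1, and exactly |C| - k of them are at least k.\<close>

section \<open>Standardized supermodular functions are monotone\<close>

lemma std_supermodular_insert_mono:
  assumes "standardized N f" "supermodular N f" "S \<subseteq> N" "x \<in> N"
  shows "f S \<le> f (insert x S)"
proof (cases "x \<in> S")
  case False
  have "f S + f {x} \<le> f (S \<union> {x}) + f (S \<inter> {x})"
    using assms(2-4) unfolding supermodular_def by blast
  moreover have "f {x} = 0" "f {} = 0"
    using assms(1,4) unfolding standardized_def by auto
  ultimately show ?thesis using False by simp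
qed (simp add: insert_absorb)

lemma std_supermodular_mono:
  assumes "finite N" "standardized N f" "supermodular N f" "T \<subseteq> S" "S \<subseteq> N"
  shows "f T \<le> f S"
proof -
  have "f T \<le> f (T \<union> D)" if "finite D" "D \<subseteq> N" for D
    using that
  proof (induction D rule: finite_induct)
    case (insert x D)
    then have "f (T \<union> D) \<le> f (insert x (T \<union> D))"
      using assms by (intro std_supermodular_insert_mono) auto
    with insert show ?case by simp
  qed simp
  moreover have "T \<union> (S - T) = S" using assms(4) by auto
  ultimately show ?thesis
    using assms by (metis Diff_subset finite_subset subset_trans)
qed

lemma std_supermodular_nonneg:
  assumes "finite N" "standardized N f" "supermodular N f" "S \<subseteq> N"
  shows "0 \<le> f S"
proof -
  have "f {} = 0" using assms(2) unfolding standardized_def by auto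
  then show ?thesis using std_supermodular_mono[OF assms(1-3), of "{}" S] assms(4) by simp
qed

lemma m_Ck_Int: "m_Ck C k (S \<inter> C) = m_Ck C k S"
  unfolding m_Ck_def by (simp add: Int_assoc)

lemma m_Ck_subset: "T \<subseteq> C \<Longrightarrow> m_Ck C k T = max 0 (real (card T) - real k)"
  unfolding m_Ck_def by (simp add: Int_absorb2)

lemma obj_of_m_Ck:
  assumes "finite C" "a \<notin> B"
  shows "obj_of (m_Ck C k) (a, B) = cluster_obj C k (a, B)"
proof (cases "a \<in> C")
  case True
  then have "card (insert a B \<inter> C) = Suc (card (B \<inter> C))"
    using assms by (simp add: Int_insert_left)
  then show ?thesis
    using True unfolding obj_of_def cluster_obj_def m_Ck_def by (auto simp: max_def)
next
  case False
  then have "insert a B \<inter> C = B \<inter> C" by auto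
  then show ?thesis using False unfolding obj_of_def cluster_obj_def m_Ck_def by simp
qed

lemma m_Ck_standardized:
  assumes "finite N" "1 \<le> k"
  shows "standardized N (m_Ck C k)"
  unfolding standardized_def
proof (intro allI impI)
  fix S assume S: "S \<subseteq> N \<and> card S \<le> 1"
  then have "card (S \<inter> C) \<le> card S"
    using assms(1) by (intro card_mono) (auto intro: finite_subset)
  with S assms(2) show "m_Ck C k S = 0" unfolding m_Ck_def by (simp add: max_def)
qed

text \<open>Convexity of the hinge t \<mapsto> max 0 (t - k).\<close>
lemma hinge_supermodular_ineq:
  fixes a b c d k :: real
  assumes "a + b = c + d" "d \<le> a" "d \<le> b"
  shows "max 0 (a - k) + max 0 (b - k) \<le> max 0 (c - k) + max 0 (d - k)"
  using assms by (simp add: max_def)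

lemma m_Ck_supermodular:
  assumes "finite C"
  shows "supermodular N (m_Ck C k)"
  unfolding supermodular_def
proof (intro allI impI)
  fix U V :: "'a set"
  have fin: "finite (U \<inter> C)" "finite (V \<inter> C)" using assms by auto
  have Un: "(U \<union> V) \<inter> C = (U \<inter> C) \<union> (V \<inter> C)"
    and Int: "(U \<inter> V) \<inter> C = (U \<inter> C) \<inter> (V \<inter> C)" by auto
  have "card (U \<inter> C) + card (V \<inter> C) = card ((U \<union> V) \<inter> C) + card ((U \<inter> V) \<inter> C)"
    unfolding Un Int using card_Un_Int[OF fin] by simp
  moreover have "card ((U \<inter> V) \<inter> C) \<le> card (U \<inter> C)" "card ((U \<inter> V) \<inter> C) \<le> card (V \<inter> C)"
    unfolding Int using fin by (auto intro: card_mono)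
  ultimately show "m_Ck C k U + m_Ck C k V \<le> m_Ck C k (U \<union> V) + m_Ck C k (U \<inter> V)"
    unfolding m_Ck_def by (intro hinge_supermodular_ineq) (simp_all flip: of_nat_add)
qed

section \<open>Functions vanishing below a threshold and modular above it\<close>

locale threshold_modular =
  fixes C :: "'a set" and k :: nat and g :: "'a set \<Rightarrow> real"
  assumes finite_C: "finite C"
    and k_pos: "1 \<le> k"
    and vanishing: "\<And>T. T \<subseteq> C \<Longrightarrow> card T \<le> k \<Longrightarrow> g T = 0"
    and modular: "\<And>T a b. T \<subseteq> C \<Longrightarrow> k \<le> card T \<Longrightarrow> a \<in> C - T \<Longrightarrow> b \<in> C - T \<Longrightarrow> a \<noteq> b
      \<Longrightarrow> g (insert a (insert b T)) + g T = g (insert a T) + g (insert b T)"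
begin

lemma obj_of_Un_eq:
  assumes "T \<subseteq> C" "k \<le> card T" "E \<subseteq> C" "a \<in> C - (T \<union> E)"
  shows "obj_of g (a, T \<union> E) = obj_of g (a, T)"
proof -
  have "finite E" using assms(3) finite_C finite_subset by blast
  then show ?thesis using assms(3,4)
  proof (induction E rule: finite_induct)
    case (insert x E)
    show ?case
    proof (cases "x \<in> T \<union> E")
      case True
      then show ?thesis using insert by (simp add: insert_absorb)
    next
      case False
      have TE: "T \<union> E \<subseteq> C" using insert assms(1) by auto
      have "card T \<le> card (T \<union> E)"
        using TE finite_C by (intro card_mono) (auto intro: finite_subset)
      then have "g (insert a (insert x (T \<union> E))) + g (T \<union> E)
          = g (insert a (T \<union> E)) + g (insert x (T \<union> E))"
        using modular[OF TE] assms(2) insert False by auto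
      then show ?thesis using insert by (simp add: obj_of_def insert_commute)
    qed
  qed simp
qed

lemma obj_of_eq_same_point:
  assumes "T \<subseteq> C" "T' \<subseteq> C" "k \<le> card T" "k \<le> card T'" "a \<in> C - T" "a \<in> C - T'"
  shows "obj_of g (a, T) = obj_of g (a, T')"
  using obj_of_Un_eq[of T T' a] obj_of_Un_eq[of T' T a] assms by (simp add: Un_commute)

text \<open>Both increments equal the increment at a set R \<union> {a, b} with |R| = k - 1,
  where g vanishes on R \<union> {a} and R \<union> {b}.\<close>
lemma obj_of_eq:
  assumes "T \<subseteq> C" "T' \<subseteq> C" "k \<le> card T" "k \<le> card T'" "a \<in> C - T" "b \<in> C - T'"
  shows "obj_of g (a, T) = obj_of g (b, T')"
proof (cases "a = b")
  case False
  have fin: "finite T" using assms(1) finite_C finite_subset by blast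
  have "k - 1 \<le> card (T - {b})" using assms(3) fin by (auto simp: card_Diff_singleton_if)
  then obtain R where R: "R \<subseteq> T - {b}" "card R = k - 1"
    by (meson obtain_subset_with_card_n)
  have finR: "finite R" using R(1) fin finite_subset by blast
  have "a \<notin> R" "b \<notin> R" using R(1) assms(5) by auto
  have aR: "insert a R \<subseteq> C" "card (insert a R) = k"
    and bR: "insert b R \<subseteq> C" "card (insert b R) = k"
    using R \<open>a \<notin> R\<close> \<open>b \<notin> R\<close> finR assms(1,5,6) k_pos by auto
  have "obj_of g (a, insert b R) = obj_of g (b, insert a R)"
    using vanishing[OF aR(1)] vanishing[OF bR(1)] aR(2) bR(2)
    by (simp add: obj_of_def insert_commute)
  moreover have "obj_of g (a, T) = obj_of g (a, insert b R)"
    using R bR assms False by (intro obj_of_eq_same_point) auto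
  moreover have "obj_of g (b, T') = obj_of g (b, insert a R)"
    using R aR assms False by (intro obj_of_eq_same_point) auto
  ultimately show ?thesis by simp
qed (use assms obj_of_eq_same_point in blast)

lemma ex_multiple_m_Ck: "\<exists>c. \<forall>T\<subseteq>C. g T = c * m_Ck C k T"
proof -
  obtain c where c: "\<And>T a. T \<subseteq> C \<Longrightarrow> k \<le> card T \<Longrightarrow> a \<in> C - T \<Longrightarrow> obj_of g (a, T) = c"
    using obj_of_eq by metis
  have "g T = c * m_Ck C k T" if "T \<subseteq> C" for T
  proof -
    have "finite T" using that finite_C finite_subset by blast
    then show ?thesis using that
    proof (induction T rule: finite_induct)
      case empty
      then show ?case using vanishing[of "{}"] by (simp add: m_Ck_def)
    next
      case (insert a T)
      show ?case
      proof (cases "k \<le> card T")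
        case True
        then have "g (insert a T) = g T + c" "m_Ck C k (insert a T) = m_Ck C k T + 1"
          using c[of T a] obj_of_m_Ck[OF finite_C, of a T k] insert
          by (auto simp: obj_of_def cluster_obj_def Int_absorb2)
        then show ?thesis using insert by (simp add: algebra_simps)
      next
        case False
        then have "card (insert a T) \<le> k" using insert by simp
        then show ?thesis
          using vanishing[OF insert(4)] m_Ck_subset[OF insert(4)] by (simp add: max_def)
      qed
    qed
  qed
  then show ?thesis by blast
qed

end

section \<open>Extremality of m_Ck\<close>

lemma m_Ck_summand_Int_eq:
  assumes "finite N" "C \<subseteq> N" "m1 \<in> std_supermod_cone N" "m2 \<in> std_supermod_cone N"
    and sum: "\<forall>S\<subseteq>N. m_Ck C k S = m1 S + m2 S" and "S \<subseteq> N"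
  shows "m1 (S \<inter> C) = m1 S"
proof -
  have "m1 (S \<inter> C) \<le> m1 S" "m2 (S \<inter> C) \<le> m2 S"
    using assms(3,4,6) std_supermodular_mono[OF assms(1)]
    unfolding std_supermod_cone_def by auto
  moreover have "m1 S + m2 S = m1 (S \<inter> C) + m2 (S \<inter> C)"
    using sum assms(6) m_Ck_Int[of C k S] by (metis inf_le1 subset_trans)
  ultimately show ?thesis by linarith
qed

lemma m_Ck_summand_threshold_modular:
  assumes "finite N" "C \<subseteq> N" "1 \<le> k" "m1 \<in> std_supermod_cone N" "m2 \<in> std_supermod_cone N"
    and sum: "\<forall>S\<subseteq>N. m_Ck C k S = m1 S + m2 S"
  shows "threshold_modular C k m1"
proof
  show finC: "finite C" using assms(1,2) finite_subset by blast
  show "1 \<le> k" by fact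
  have cone: "standardized N m1" "supermodular N m1" "standardized N m2" "supermodular N m2"
    using assms(4,5) unfolding std_supermod_cone_def by auto
  note nonneg = std_supermodular_nonneg[OF assms(1)]
  show "m1 T = 0" if "T \<subseteq> C" "card T \<le> k" for T
  proof -
    have "m_Ck C k T = 0" using m_Ck_subset[OF that(1)] that(2) by (simp add: max_def)
    then show ?thesis using sum nonneg[OF cone(1,2)] nonneg[OF cone(3,4)] that(1) assms(2)
      by (metis add_nonneg_eq_0_iff subset_trans)
  qed
  fix T a b
  assume T: "T \<subseteq> C" "k \<le> card T" "a \<in> C - T" "b \<in> C - T" "a \<noteq> b"
  let ?ab = "insert a (insert b T)"
  have sets: "insert a T \<union> insert b T = ?ab" "insert a T \<inter> insert b T = T" using T by auto
  have sub: "T \<subseteq> N" "insert a T \<subseteq> N" "insert b T \<subseteq> N" "?ab \<subseteq> N" using T assms(2) by auto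
  have "m1 (insert a T) + m1 (insert b T) \<le> m1 ?ab + m1 T"
    "m2 (insert a T) + m2 (insert b T) \<le> m2 ?ab + m2 T"
    using cone(2,4) sub unfolding supermodular_def by (metis sets)+
  moreover have "m_Ck C k ?ab - m_Ck C k (insert b T) = 1" "m_Ck C k (insert a T) - m_Ck C k T = 1"
    using obj_of_m_Ck[OF finC, of a "insert b T" k] obj_of_m_Ck[OF finC, of a T k] T
      card_insert_le[of T b]
    by (simp_all add: obj_of_def cluster_obj_def Int_absorb2)
  ultimately show "m1 ?ab + m1 T = m1 (insert a T) + m1 (insert b T)"
    using sum sub by fastforce
qed

lemma m_Ck_extreme:
  assumes "finite N" "C \<subseteq> N" "1 \<le> k" "k < card C"
  shows "extreme N (m_Ck C k)"
  unfolding extreme_def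
proof (intro conjI allI impI)
  have finC: "finite C" using assms(1,2) finite_subset by blast
  show "m_Ck C k \<in> std_supermod_cone N"
    unfolding std_supermod_cone_def
    using m_Ck_standardized[OF assms(1,3)] m_Ck_supermodular[OF finC] by simp
  have pos: "0 < m_Ck C k C" using m_Ck_subset[of C C k] assms(4) by simp
  then show "\<exists>S\<subseteq>N. m_Ck C k S \<noteq> 0" using assms(2) by (intro exI[of _ C]) auto
  fix m1 m2
  assume dec: "m1 \<in> std_supermod_cone N \<and> m2 \<in> std_supermod_cone N \<and>
    (\<forall>S\<subseteq>N. m_Ck C k S = m1 S + m2 S)"
  then interpret threshold_modular C k m1
    using m_Ck_summand_threshold_modular[OF assms(1-3)] by blast
  obtain c where c: "\<And>T. T \<subseteq> C \<Longrightarrow> m1 T = c * m_Ck C k T"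
    using ex_multiple_m_Ck by blast
  have scaled: "m1 S = c * m_Ck C k S" if "S \<subseteq> N" for S
    using m_Ck_summand_Int_eq[OF assms(1,2), of m1 m2 k S] dec that c[of "S \<inter> C"]
    by (simp add: m_Ck_Int)
  have "0 \<le> m1 C"
    using dec assms(2) std_supermodular_nonneg[OF assms(1)] unfolding std_supermod_cone_def by blast
  then have "0 \<le> c" using c[of C] pos by (simp add: zero_le_mult_iff)
  with scaled show "\<exists>c\<ge>0. \<forall>S\<subseteq>N. m1 S = c * m_Ck C k S" by blast
qed

section \<open>Full graphs\<close>

lemma full_graph_trans:
  assumes "full_graph N H"
  shows "trans H"
proof (rule transI)
  fix x y z assume xy: "(x, y) \<in> H" and yz: "(y, z) \<in> H"
  have HN: "H \<subseteq> N \<times> N" and acy: "acyclic H"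
    using assms unfolding full_graph_def is_dag_def by auto
  have "(x, z) \<in> H\<^sup>+" using xy yz by auto
  moreover have "(z, x) \<in> H \<Longrightarrow> (x, x) \<in> H\<^sup>+"
    using \<open>(x, z) \<in> H\<^sup>+\<close> by (meson r_into_trancl trancl_trans)
  ultimately have "x \<noteq> z" "(z, x) \<notin> H" using acy unfolding acyclic_def by auto
  then show "(x, z) \<in> H" using assms xy yz HN unfolding full_graph_def by blast
qed

lemma pa_subset:
  assumes "is_dag N H"
  shows "pa H a \<subseteq> N - {a}"
  using assms unfolding is_dag_def acyclic_def pa_def by auto

text \<open>In a full graph the parents of a node of C within C form an initial segment of the
  induced linear order on C, so their number determines the node.\<close>
lemma full_graph_bij_betw_card_pa_Int:
  assumes "full_graph N H" "finite C" "C \<subseteq> N"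
  shows "bij_betw (\<lambda>a. card (pa H a \<inter> C)) C {..<card C}"
proof -
  define f where "f a = card (pa H a \<inter> C)" for a
  have dag: "is_dag N H" using assms(1) unfolding full_graph_def by blast
  have less: "f a < f b" if "a \<in> C" "(a, b) \<in> H" for a b
  proof -
    have "pa H a \<inter> C \<subset> pa H b \<inter> C"
      using that full_graph_trans[OF assms(1)] pa_subset[OF dag, of a]
      unfolding pa_def by (auto dest: transD)
    then show ?thesis unfolding f_def using assms(2) by (simp add: psubset_card_mono)
  qed
  have "inj_on f C"
  proof (rule inj_onI)
    fix a b assume "a \<in> C" "b \<in> C" "f a = f b"
    then show "a = b"
      using less assms(1,3) unfolding full_graph_def by (metis less_irrefl subsetD)
  qed
  moreover have "f ` C \<subseteq> {..<card C}"
  proof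
    fix y assume "y \<in> f ` C"
    then obtain a where a: "a \<in> C" "y = f a" by blast
    have "pa H a \<inter> C \<subseteq> C - {a}" using pa_subset[OF dag] by auto
    then have "f a < card C" unfolding f_def using a(1) assms(2)
      by (metis card_Diff1_less card_mono finite_Diff le_less_trans)
    then show "y \<in> {..<card C}" using a by simp
  qed
  ultimately show ?thesis unfolding f_def
    by (simp add: bij_betw_def card_image card_subset_eq)
qed

lemma full_graph_card_many_parents:
  assumes "full_graph N H" "finite C" "C \<subseteq> N"
  shows "card {a \<in> C. k \<le> card (pa H a \<inter> C)} = card C - k"
proof -
  let ?f = "\<lambda>a. card (pa H a \<inter> C)"
  have inj: "inj_on ?f C" and img: "?f ` C = {..<card C}"
    using full_graph_bij_betw_card_pa_Int[OF assms] unfolding bij_betw_def by auto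
  have "?f ` {a \<in> C. k \<le> ?f a} = {y \<in> ?f ` C. k \<le> y}" by auto
  also have "\<dots> = {k..<card C}" unfolding img by auto
  finally show ?thesis
    using card_image[OF inj_on_subset[OF inj, of "{a \<in> C. k \<le> ?f a}"]] by auto
qed

lemma inner_Ups_cluster_obj_eta:
  assumes "finite N" "C \<subseteq> N" "1 \<le> k" "is_dag N H"
  shows "inner_Ups N (cluster_obj C k) (eta H) = card {a \<in> C. k \<le> card (pa H a \<inter> C)}"
proof -
  define A where "A = {a \<in> C. k \<le> card (pa H a \<inter> C)}"
  define X where "X = (\<lambda>a. (a, pa H a)) ` A"
  have "X \<subseteq> Upsilon N"
  proof
    fix x assume "x \<in> X"
    then obtain a where a: "a \<in> C" "k \<le> card (pa H a \<inter> C)" "x = (a, pa H a)"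
      unfolding X_def A_def by auto
    moreover have "pa H a \<noteq> {}" using a(2) assms(3) by auto
    moreover have "a \<in> N" using a(1) assms(2) by blast
    ultimately show "x \<in> Upsilon N"
      using pa_subset[OF assms(4), of a] by (simp add: Upsilon_def)
  qed
  moreover have "finite (Upsilon N)"
  proof (rule finite_subset)
    show "Upsilon N \<subseteq> N \<times> Pow N" unfolding Upsilon_def by auto
  qed (use assms(1) in simp)
  moreover have "cluster_obj C k ab * eta H ab = (if ab \<in> X then 1 else 0)" for ab
  proof -
    obtain a B where ab: "ab = (a, B)" by fastforce
    have "ab \<in> X \<longleftrightarrow> a \<in> C \<and> k \<le> card (B \<inter> C) \<and> B = pa H a"
      unfolding ab X_def A_def by auto
    then show ?thesis unfolding ab cluster_obj_def eta_def by auto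
  qed
  ultimately have "inner_Ups N (cluster_obj C k) (eta H) = card X"
    unfolding inner_Ups_def by (simp add: sum.If_cases Int_absorb1)
  also have "card X = card A" unfolding X_def by (rule card_image) (auto intro: inj_onI)
  finally show ?thesis unfolding A_def .
qed

theorem lemma9:
  fixes N C :: "'a set" and k :: nat
  assumes "finite N" and "C \<subseteq> N" and "card C \<ge> 2"
    and "1 \<le> k" and "k \<le> card C - 1"
  shows "extreme N (m_Ck C k)
    \<and> (\<forall>ab\<in>Upsilon N. obj_of (m_Ck C k) ab = cluster_obj C k ab)
    \<and> (\<forall>H. full_graph N H \<longrightarrow>
          inner_Ups N (obj_of (m_Ck C k)) (eta H) = real (card C) - real k)"
proof (intro conjI allI impI ballI)
  have finC: "finite C" using assms(1,2) finite_subset by blast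
  have "k < card C" using assms(3,5) by linarith
  show "extreme N (m_Ck C k)" using m_Ck_extreme assms(1,2,4) \<open>k < card C\<close> by blast
  show obj: "obj_of (m_Ck C k) ab = cluster_obj C k ab" if "ab \<in> Upsilon N" for ab
    using that obj_of_m_Ck[OF finC] unfolding Upsilon_def by auto
  fix H assume H: "full_graph N H"
  have "inner_Ups N (obj_of (m_Ck C k)) (eta H) = inner_Ups N (cluster_obj C k) (eta H)"
    unfolding inner_Ups_def using obj by simp
  also have "\<dots> = card {a \<in> C. k \<le> card (pa H a \<inter> C)}"
    using inner_Ups_cluster_obj_eta[OF assms(1,2,4)] H unfolding full_graph_def by blast
  also have "\<dots> = real (card C) - real k"
    using full_graph_card_many_parents[OF H finC assms(2)] \<open>k < card C\<close> by simp
  finally show "inner_Ups N (obj_of (m_Ck C k)) (eta H) = real (card C) - real k" .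
qed

end
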